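(* Let $d\geq1$ be an integer and $\mathbb G=V_1\times V_2$ a step-two Carnot group. Then $\mathcal A_h(\mathbb G)=\mathcal A(V_1\times V_2)$ if and only if $\mathcal A_h(\mathbb G\times\mathbb R^d)=\mathcal A((V_1\oplus\mathbb R^d)\times V_2)$.
   Context: A step-two Carnot group is $\mathbb G=V_1\times V_2$ ($V_1,V_2$ finite-dimensional real vector spaces, $V_2\ne\{0\}$) with a bilinear skew-symmetric $[\cdot,\cdot]:V_1\times V_1\to V_2$ whose image spans $V_2$, and group law $(x,z)\cdot(x',z')=(x+x',z+z'+[x,x'])$. $\mathcal A_h(\mathbb G)$ is the space of maps $f:\mathbb G\to\mathbb R$ such that for all $(x,z)\in\mathbb G$, $y\in V_1$, $t\mapsto f((x,z)\cdot(ty,0))$ is affine; $\mathcal A(W)$ is the space of maps affine in the usual sense on a vector space $W$. $\mathbb G\times\mathbb R^d$ is the step-two Carnot group $(V_1\oplus\mathbb R^d)\times V_2$ with bracket $[x+u,x'+u']:=[x,x']$ for $x,x'\in V_1$, $u,u'\in\mathbb R^d$. *)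

theory Defs
  imports "HOL-Analysis.Analysis"
begin

definition step2_bracket :: "('a::real_vector \<Rightarrow> 'a \<Rightarrow> 'b::real_vector) \<Rightarrow> bool" where
  "step2_bracket br \<longleftrightarrow>
     bilinear br \<and> (\<forall>x y. br x y = - br y x) \<and>
     span {br x y | x y. True} = UNIV \<and> (UNIV :: 'b set) \<noteq> {0}"

definition cg_mult :: "('a::real_vector \<Rightarrow> 'a \<Rightarrow> 'b::real_vector) \<Rightarrow> 'a \<times> 'b \<Rightarrow> 'a \<times> 'b \<Rightarrow> 'a \<times> 'b" where
  "cg_mult br p q = (fst p + fst q, snd p + snd q + br (fst p) (fst q))"

definition horiz_affine_maps :: "('a::real_vector \<Rightarrow> 'a \<Rightarrow> 'b::real_vector) \<Rightarrow> ('a \<times> 'b \<Rightarrow> real) set" where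
  "horiz_affine_maps br = {f. \<forall>p y. \<exists>a b::real. \<forall>t::real.
       f (cg_mult br p (t *\<^sub>R y, 0)) = a + t * b}"

definition affine_maps :: "('w::real_vector \<Rightarrow> real) set" where
  "affine_maps = {f. \<exists>l c. linear l \<and> (\<forall>w. f w = l w + c)}"

definition ext_bracket :: "('a::real_vector \<Rightarrow> 'a \<Rightarrow> 'b::real_vector) \<Rightarrow> ('a \<times> 'c::real_vector) \<Rightarrow> ('a \<times> 'c) \<Rightarrow> 'b" where
  "ext_bracket br p q = br (fst p) (fst q)"

end

theory Submission
  imports Defs
begin

text \<open>Affine maps are the maps that are affine on every line, and horizontal lines are
  affine lines, so every affine map is horizontally affine; only the inclusions
  \<open>A\<^sub>h \<subseteq> A\<close> matter. If \<open>A\<^sub>h(G \<times> \<real>\<^sup>d) \<subseteq> A\<close>, then \<open>A\<^sub>h(G) \<subseteq> A\<close>, because pulling back along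
  the projection forgetting the \<open>\<real>\<^sup>d\<close>-component preserves horizontal affinity.
  Conversely, let \<open>F\<close> be horizontally affine on \<open>G \<times> \<real>\<^sup>d\<close> and consider a line with
  direction \<open>((y, v), \<zeta>)\<close>, \<open>y \<noteq> 0\<close>. Restricting \<open>F\<close> to a translate of the graph of
  the linear map \<open>x \<mapsto> (x \<bullet> y / y \<bullet> y) v\<close> gives a horizontally affine, hence affine,
  map on \<open>G\<close>, and the line lies in that graph. For a direction \<open>w\<close> with vanishing
  \<open>V\<^sub>1\<close>-component, all the directions \<open>e + m w\<close> (\<open>m\<close> real, \<open>e \<in> V\<^sub>1\<close> nonzero) are of the
  previous kind, and a function on the plane that is affine along every direction
  \<open>(1, m)\<close> is also affine along \<open>(0, 1)\<close>.\<close>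

definition affine_along :: "('w::real_vector \<Rightarrow> real) \<Rightarrow> 'w \<Rightarrow> bool" where
  "affine_along f v \<longleftrightarrow> (\<forall>p. \<exists>a b. \<forall>t. f (p + t *\<^sub>R v) = a + t * b)"

lemma affine_along_two_point_form:
  assumes "affine_along f v"
  shows "f (p + t *\<^sub>R v) = f p + t * (f (p + v) - f p)"
proof -
  obtain a b where "\<forall>t. f (p + t *\<^sub>R v) = a + t * b"
    using assms unfolding affine_along_def by blast
  from this[rule_format, of 0] this[rule_format, of 1] this[rule_format, of t]
  show ?thesis by simp
qed

lemma affine_maps_iff_affine_along:
  fixes f :: "'w::real_vector \<Rightarrow> real"
  shows "f \<in> affine_maps \<longleftrightarrow> (\<forall>v. affine_along f v)"
proof
  assume "f \<in> affine_maps"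
  then obtain l c where "linear l" "\<And>w. f w = l w + c"
    unfolding affine_maps_def by blast
  then have "f (p + t *\<^sub>R v) = (l p + c) + t * l v" for p v t
    by (simp add: linear_add linear_scale)
  then show "\<forall>v. affine_along f v"
    unfolding affine_along_def by blast
next
  assume along: "\<forall>v. affine_along f v"
  define l where "l w = f w - f 0" for w
  have scale: "l (c *\<^sub>R w) = c * l w" for c w
    using affine_along_two_point_form[of f w 0 c] along by (simp add: l_def)
  have add: "l (u + v) = l u + l v" for u v
  proof -
    have "f (2 *\<^sub>R u + 2 *\<^sub>R (v - u)) = f (2 *\<^sub>R u) + 2 * (f (2 *\<^sub>R u + (v - u)) - f (2 *\<^sub>R u))"
      using affine_along_two_point_form[of f "v - u" "2 *\<^sub>R u" 2] along by blast
    moreover have "2 *\<^sub>R u + 2 *\<^sub>R (v - u) = 2 *\<^sub>R v" "2 *\<^sub>R u + (v - u) = u + v"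
      by (simp_all add: algebra_simps scaleR_2)
    ultimately show ?thesis
      using scale[of 2 u] scale[of 2 v] by (simp add: l_def)
  qed
  have "linear l"
    by (rule linearI) (use add scale in auto)
  moreover have "\<And>w. f w = l w + f 0"
    by (simp add: l_def)
  ultimately show "f \<in> affine_maps"
    unfolding affine_maps_def by blast
qed

lemma affine_maps_comp_linear:
  assumes "f \<in> affine_maps" and "linear g"
  shows "f \<circ> g \<in> affine_maps"
proof -
  obtain l c where "linear l" "\<And>w. f w = l w + c"
    using assms(1) unfolding affine_maps_def by blast
  with assms(2) show ?thesis
    unfolding affine_maps_def by (auto intro!: exI[of _ "l \<circ> g"] linear_compose)
qed

lemma affine_along_plane:
  fixes g :: "real \<Rightarrow> real \<Rightarrow> real"
  assumes along: "\<And>u v m. \<exists>a b. \<forall>s. g (u + s) (v + m * s) = a + s * b"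
  shows "\<exists>a b. \<forall>t. g 0 t = a + t * b"
proof -
  have collinear: "g (u + s) (v + m * s) = g u v + s * (g (u + 1) (v + m) - g u v)"
    for u v m s
  proof -
    obtain a b where "\<forall>s. g (u + s) (v + m * s) = a + s * b"
      using along by blast
    from this[rule_format, of 0] this[rule_format, of 1] this[rule_format, of s]
    show ?thesis by simp
  qed
  define k where "k t = g 1 t - g 0 t" for t
  have horizontal: "g s t = g 0 t + s * k t" for s t
    using collinear[where u = 0 and v = t and m = 0 and s = s] by (simp add: k_def)
  have midpoint: "2 * g 0 ((c + d) / 2) = g (-1) c + g 1 d" for c d
    using collinear[where u = "-1" and v = c and m = "(d - c) / 2" and s = 1]
      collinear[where u = "-1" and v = c and m = "(d - c) / 2" and s = 2]
    by (simp add: field_simps)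
  have k_const: "k c = k 0" for c
    \<comment> \<open>the segments from \<open>(-1, c)\<close> to \<open>(1, 0)\<close> and from \<open>(-1, 0)\<close> to \<open>(1, c)\<close>
      share their midpoint\<close>
    using midpoint[of c 0] midpoint[of 0 c] horizontal[of "-1" c] horizontal[of "-1" 0]
    by (simp add: k_def add.commute)
  obtain a b where diagonal: "\<forall>s. g (0 + s) (0 + 1 * s) = a + s * b"
    using along by blast
  have "g 0 t = a + t * (b - k 0)" for t
    using diagonal[rule_format, of t] horizontal[of t t] k_const[of t]
    by (simp add: algebra_simps)
  then show ?thesis by blast
qed

lemma affine_along_if_affine_along_shears:
  assumes "\<And>m. affine_along f (e + m *\<^sub>R w)"
  shows "affine_along f w"
  unfolding affine_along_def
proof
  fix p
  define g where "g s t = f (p + s *\<^sub>R e + t *\<^sub>R w)" for s t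
  have "\<exists>a b. \<forall>s. g (u + s) (v + m * s) = a + s * b" for u v m
  proof -
    obtain a b where line: "\<forall>s. f ((p + u *\<^sub>R e + v *\<^sub>R w) + s *\<^sub>R (e + m *\<^sub>R w)) = a + s * b"
      using assms unfolding affine_along_def by blast
    have "g (u + s) (v + m * s) = a + s * b" for s
      using line[rule_format, of s] by (simp add: g_def algebra_simps)
    then show ?thesis by blast
  qed
  then obtain a b where "\<forall>t. g 0 t = a + t * b"
    using affine_along_plane by blast
  then show "\<exists>a b. \<forall>t. f (p + t *\<^sub>R w) = a + t * b"
    by (auto simp: g_def)
qed

lemma affine_maps_subset_horiz_affine_maps:
  fixes br :: "'a::real_vector \<Rightarrow> 'a \<Rightarrow> 'b::real_vector"
  assumes homogeneous: "\<And>x t y. br x (t *\<^sub>R y) = t *\<^sub>R br x y"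
  shows "affine_maps \<subseteq> horiz_affine_maps br"
  unfolding horiz_affine_maps_def
proof (intro subsetI CollectI allI)
  fix f :: "'a \<times> 'b \<Rightarrow> real" and p y
  assume "f \<in> affine_maps"
  then obtain a b where "\<forall>t. f (p + t *\<^sub>R (y, br (fst p) y)) = a + t * b"
    unfolding affine_maps_iff_affine_along affine_along_def by blast
  moreover have "cg_mult br p (t *\<^sub>R y, 0) = p + t *\<^sub>R (y, br (fst p) y)" for t
    by (cases p) (simp add: cg_mult_def homogeneous)
  ultimately show "\<exists>a b. \<forall>t. f (cg_mult br p (t *\<^sub>R y, 0)) = a + t * b"
    by auto
qed

lemma horiz_affine_maps_ext_bracket_projection:
  fixes br :: "'a::real_vector \<Rightarrow> 'a \<Rightarrow> 'b::real_vector"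
  assumes "f \<in> horiz_affine_maps br"
  shows "(\<lambda>w. f (fst (fst w), snd w))
    \<in> horiz_affine_maps (ext_bracket br :: 'a \<times> 'c::real_vector \<Rightarrow> _ \<Rightarrow> 'b)"
  using assms unfolding horiz_affine_maps_def
  by (auto simp: cg_mult_def ext_bracket_def)

lemma horiz_affine_maps_ext_bracket_graph:
  fixes br :: "'a::real_vector \<Rightarrow> 'a \<Rightarrow> 'b::real_vector" and \<Lambda> :: "'a \<Rightarrow> 'c::real_vector"
  assumes "F \<in> horiz_affine_maps (ext_bracket br)" and "linear \<Lambda>"
  shows "(\<lambda>q. F ((fst q, \<Lambda> (fst q) + c), snd q)) \<in> horiz_affine_maps br"
proof -
  define lift :: "'a \<times> 'b \<Rightarrow> ('a \<times> 'c) \<times> 'b" where "lift q = ((fst q, \<Lambda> (fst q) + c), snd q)" for q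
  have lift_cg_mult: "lift (cg_mult br q (t *\<^sub>R y, 0))
      = cg_mult (ext_bracket br) (lift q) (t *\<^sub>R (y, \<Lambda> y), 0)" for q y t
    using assms(2) by (simp add: lift_def cg_mult_def ext_bracket_def linear_add linear_scale)
  have "F \<circ> lift \<in> horiz_affine_maps br"
    using assms(1) unfolding horiz_affine_maps_def
    by (simp only: mem_Collect_eq comp_def lift_cg_mult) blast
  then show ?thesis
    by (simp add: lift_def comp_def)
qed

lemma horiz_affine_maps_subset_if_ext_bracket:
  fixes br :: "'a::real_vector \<Rightarrow> 'a \<Rightarrow> 'b::real_vector"
  assumes "horiz_affine_maps (ext_bracket br :: 'a \<times> 'c::real_vector \<Rightarrow> _ \<Rightarrow> 'b) \<subseteq> affine_maps"
  shows "horiz_affine_maps br \<subseteq> affine_maps"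
proof
  fix f
  assume "f \<in> horiz_affine_maps br"
  then have "(\<lambda>w. f (fst (fst w), snd w)) \<in> (affine_maps :: (('a \<times> 'c) \<times> 'b \<Rightarrow> real) set)"
    using assms horiz_affine_maps_ext_bracket_projection by blast
  then have "(\<lambda>w. f (fst (fst w), snd w)) \<circ> (\<lambda>(x, z). ((x, 0 :: 'c), z)) \<in> affine_maps"
    by (rule affine_maps_comp_linear) (auto intro!: linearI)
  then show "f \<in> affine_maps"
    by (simp add: comp_def case_prod_beta')
qed

lemma affine_along_ext_bracket_if_transversal:
  fixes br :: "'a::real_inner \<Rightarrow> 'a \<Rightarrow> 'b::real_vector"
    and F :: "('a \<times> 'c::real_vector) \<times> 'b \<Rightarrow> real"
  assumes horiz_affine: "horiz_affine_maps br \<subseteq> affine_maps"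
    and F: "F \<in> horiz_affine_maps (ext_bracket br)"
    and transversal: "fst (fst w) \<noteq> 0"
  shows "affine_along F w"
  unfolding affine_along_def
proof
  fix p :: "('a \<times> 'c) \<times> 'b"
  obtain x0 u0 z0 y v \<zeta> where pw: "p = ((x0, u0), z0)" "w = ((y, v), \<zeta>)"
    by (metis prod.collapse)
  define \<Lambda> where "\<Lambda> x = (x \<bullet> y / (y \<bullet> y)) *\<^sub>R v" for x
  have "linear \<Lambda>"
    by (auto intro!: linearI simp: \<Lambda>_def inner_add_left add_divide_distrib scaleR_add_left)
  have "\<Lambda> y = v"
    using transversal pw by (simp add: \<Lambda>_def)
  define f where "f q = F ((fst q, \<Lambda> (fst q) + (u0 - \<Lambda> x0)), snd q)" for q
  have "f \<in> affine_maps"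
    using horiz_affine horiz_affine_maps_ext_bracket_graph[OF F \<open>linear \<Lambda>\<close>]
    unfolding f_def by blast
  then obtain a b where "\<forall>t. f ((x0, z0) + t *\<^sub>R (y, \<zeta>)) = a + t * b"
    unfolding affine_maps_iff_affine_along affine_along_def by blast
  moreover have "f ((x0, z0) + t *\<^sub>R (y, \<zeta>)) = F (p + t *\<^sub>R w)" for t
    using \<open>linear \<Lambda>\<close> \<open>\<Lambda> y = v\<close> by (simp add: f_def pw linear_add linear_scale add.commute)
  ultimately show "\<exists>a b. \<forall>t. F (p + t *\<^sub>R w) = a + t * b"
    by metis
qed

lemma ext_bracket_horiz_affine_maps_subset:
  fixes br :: "'a::euclidean_space \<Rightarrow> 'a \<Rightarrow> 'b::real_vector"
  assumes horiz_affine: "horiz_affine_maps br \<subseteq> affine_maps"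
  shows "horiz_affine_maps (ext_bracket br :: 'a \<times> 'c::real_vector \<Rightarrow> _ \<Rightarrow> 'b) \<subseteq> affine_maps"
proof
  fix F
  assume F: "F \<in> horiz_affine_maps (ext_bracket br :: 'a \<times> 'c \<Rightarrow> _ \<Rightarrow> 'b)"
  obtain y0 :: 'a where "y0 \<noteq> 0"
    by (metis ex_in_conv nonempty_Basis nonzero_Basis)
  have "affine_along F w" for w
  proof (cases "fst (fst w) = 0")
    case False
    then show ?thesis
      using affine_along_ext_bracket_if_transversal[OF horiz_affine F] by blast
  next
    case True
    have "affine_along F (((y0, 0), 0) + m *\<^sub>R w)" for m
      using affine_along_ext_bracket_if_transversal[OF horiz_affine F] True \<open>y0 \<noteq> 0\<close> by simp
    then show ?thesis
      by (rule affine_along_if_affine_along_shears)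
  qed
  then show "F \<in> affine_maps"
    by (simp add: affine_maps_iff_affine_along)
qed

theorem proposition6p3:
  fixes br :: "'a::euclidean_space \<Rightarrow> 'a \<Rightarrow> 'b::euclidean_space"
  assumes "step2_bracket br"
  shows "horiz_affine_maps br = (affine_maps :: ('a \<times> 'b \<Rightarrow> real) set) \<longleftrightarrow>
         horiz_affine_maps (ext_bracket br :: 'a \<times> (real^'n) \<Rightarrow> 'a \<times> (real^'n) \<Rightarrow> 'b)
           = (affine_maps :: (('a \<times> (real^'n)) \<times> 'b \<Rightarrow> real) set)"
proof -
  have "bilinear br"
    using assms unfolding step2_bracket_def by blast
  then have homogeneous: "br x (t *\<^sub>R y) = t *\<^sub>R br x y" for x t y
    unfolding bilinear_def by (simp add: linear_scale)
  have "affine_maps \<subseteq> horiz_affine_maps br"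
    by (rule affine_maps_subset_horiz_affine_maps) (rule homogeneous)
  moreover have "affine_maps \<subseteq> horiz_affine_maps
      (ext_bracket br :: 'a \<times> (real^'n) \<Rightarrow> 'a \<times> (real^'n) \<Rightarrow> 'b)"
    by (rule affine_maps_subset_horiz_affine_maps) (simp add: ext_bracket_def homogeneous)
  moreover have "horiz_affine_maps br \<subseteq> affine_maps \<longleftrightarrow> horiz_affine_maps
      (ext_bracket br :: 'a \<times> (real^'n) \<Rightarrow> 'a \<times> (real^'n) \<Rightarrow> 'b) \<subseteq> affine_maps"
  proof
    assume "horiz_affine_maps br \<subseteq> affine_maps"
    then show "horiz_affine_maps (ext_bracket br :: 'a \<times> (real^'n) \<Rightarrow> _ \<Rightarrow> 'b) \<subseteq> affine_maps"
      by (rule ext_bracket_horiz_affine_maps_subset)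
  qed (rule horiz_affine_maps_subset_if_ext_bracket)
  ultimately show ?thesis
    by (simp only: set_eq_subset)
qed

end
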